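(* Let $G$ be an edge-colored graph of order $n\geq3$. If $e(G)+c(G)\geq\binom{n+1}{2}$ and $G$ contains exactly one rainbow triangle, then $e(G)+c(G)=\binom{n+1}{2}$ and $G$ is complete.
   Context: An edge-colored graph is a finite simple graph $G$ with a map $C:E(G)\to\mathbb{N}$. $e(G)=|E(G)|$, $c(G)$ is the number of distinct colors appearing on $E(G)$. A subgraph is rainbow if all its edges have distinct colors. *)

theory Defs
  imports Main
begin

(* A finite simple graph: finite vertex set V and edge set E of 2-element subsets of V.
   An edge-coloring is a map C from edges to nat (only values on E matter). *)
definition simple_graph :: "'a set \<Rightarrow> 'a set set \<Rightarrow> bool" where
  "simple_graph V E \<longleftrightarrow> finite V \<and> E \<subseteq> {e. e \<subseteq> V \<and> card e = 2}"

definition num_colors :: "'a set set \<Rightarrow> ('a set \<Rightarrow> nat) \<Rightarrow> nat" where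
  "num_colors E C = card (C ` E)"

definition rainbow_triangles :: "'a set set \<Rightarrow> ('a set \<Rightarrow> nat) \<Rightarrow> 'a set set" where
  "rainbow_triangles E C = {{x, y, z} | x y z.
     x \<noteq> y \<and> y \<noteq> z \<and> x \<noteq> z \<and>
     {x, y} \<in> E \<and> {y, z} \<in> E \<and> {x, z} \<in> E \<and>
     C {x, y} \<noteq> C {y, z} \<and> C {y, z} \<noteq> C {x, z} \<and> C {x, y} \<noteq> C {x, z}}"

definition complete_graph :: "'a set \<Rightarrow> 'a set set \<Rightarrow> bool" where
  "complete_graph V E \<longleftrightarrow> E = {e. e \<subseteq> V \<and> card e = 2}"

end

(* A rainbow-triangle-free graph G on n \<ge> 1 vertices satisfies e(G) + c(G) \<le> C(n+1,2) - 1, and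
   even e(G) + c(G) \<le> C(n+1,2) - 2 unless G is complete. This is proved by induction on n:
   deleting a vertex v loses its d(v) edges and at most the s(v) colours seen only at v, and a
   counting argument over private neighbours finds a vertex with d(v) + s(v) \<le> n, with room for
   the completeness bonus.

   Now let T be the unique rainbow triangle of G and e, f two of its sides. If the colour of e
   appears elsewhere, deleting e keeps all colours and leaves an incomplete rainbow-free graph,
   so e(G) + c(G) \<le> C(n+1,2) - 1. Otherwise recolouring e with the colour of f destroys T,
   creates no new rainbow triangle and loses exactly one colour, so
   e(G) + c(G) - 1 \<le> C(n+1,2) - 1 - [G incomplete]. *)

theory Submission
  imports Defs "HOL-Library.Ramsey"
begin

definition neighbours :: "'a set set \<Rightarrow> 'a \<Rightarrow> 'a set" where
  "neighbours E v = {w. {v, w} \<in> E}"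

definition delete_vertex :: "'a set set \<Rightarrow> 'a \<Rightarrow> 'a set set" where
  "delete_vertex E v = {e \<in> E. v \<notin> e}"

definition private_colours :: "'a set set \<Rightarrow> ('a set \<Rightarrow> 'c) \<Rightarrow> 'a \<Rightarrow> 'c set" where
  "private_colours E C v = C ` E - C ` delete_vertex E v"

lemma two_subsets_eq_nsets: "{e. e \<subseteq> V \<and> card e = 2} = [V]\<^bsup>2\<^esup>"
  by (auto simp: nsets_def intro: card_ge_0_finite)

lemma simple_graph_iff: "simple_graph V E \<longleftrightarrow> finite V \<and> E \<subseteq> [V]\<^bsup>2\<^esup>"
  by (simp add: simple_graph_def two_subsets_eq_nsets)

lemma complete_graph_iff: "complete_graph V E \<longleftrightarrow> E = [V]\<^bsup>2\<^esup>"
  by (simp add: complete_graph_def two_subsets_eq_nsets)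

lemma simple_graph_finite_edges: "simple_graph V E \<Longrightarrow> finite E"
  by (auto simp: simple_graph_iff intro: finite_subset finite_imp_finite_nsets)

lemma simple_graph_edge_endpoints:
  "simple_graph V E \<Longrightarrow> {v, w} \<in> E \<Longrightarrow> v \<in> V \<and> w \<in> V \<and> v \<noteq> w"
  unfolding simple_graph_iff by (metis doubleton_in_nsets_2 subsetD)

lemma neighbours_subset: "simple_graph V E \<Longrightarrow> neighbours E v \<subseteq> V - {v}"
  by (auto simp: neighbours_def dest: simple_graph_edge_endpoints)

lemma card_neighbours_less: "simple_graph V E \<Longrightarrow> v \<in> V \<Longrightarrow> card (neighbours E v) < card V"
  by (metis neighbours_subset card_Diff1_less card_mono simple_graph_iff finite_Diff le_less_trans)

lemma card_neighbours_non_edge: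
  assumes sg: "simple_graph V E" and uw: "{u, w} \<in> [V]\<^bsup>2\<^esup>" "{u, w} \<notin> E"
  shows "card (neighbours E u) + 2 \<le> card V"
proof -
  have "neighbours E u \<subseteq> V - {u, w}"
    using neighbours_subset[OF sg, of u] uw(2) by (auto simp: neighbours_def)
  then have "card (neighbours E u) \<le> card (V - {u, w})"
    using sg by (intro card_mono) (auto simp: simple_graph_iff)
  moreover have "card {u, w} \<le> card V"
    using sg uw(1) by (intro card_mono) (auto simp: simple_graph_iff)
  ultimately show ?thesis
    using sg uw(1) by (auto simp: simple_graph_iff card_Diff_subset)
qed

lemma card_edges_delete_vertex:
  assumes sg: "simple_graph V E"
  shows "card E = card (delete_vertex E v) + card (neighbours E v)"
proof -
  have at_v: "{e \<in> E. v \<in> e} = (\<lambda>w. {v, w}) ` neighbours E v"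
  proof (intro equalityI subsetI)
    fix e assume e: "e \<in> {e \<in> E. v \<in> e}"
    then have "e \<in> [V]\<^bsup>2\<^esup>"
      using sg by (auto simp: simple_graph_iff)
    then obtain x y where "e = {x, y}"
      by (rule nsets2_E)
    with e show "e \<in> (\<lambda>w. {v, w}) ` neighbours E v"
      by (auto simp: neighbours_def insert_commute)
  qed (auto simp: neighbours_def)
  have "inj_on (\<lambda>w. {v, w}) (neighbours E v)"
    by (rule inj_onI) (auto simp: doubleton_eq_iff)
  then have "card {e \<in> E. v \<in> e} = card (neighbours E v)"
    by (simp add: at_v card_image)
  moreover have "card E = card (delete_vertex E v) + card {e \<in> E. v \<in> e}"
    using simple_graph_finite_edges[OF sg]
    by (subst card_Un_disjoint[symmetric]) (auto simp: delete_vertex_def intro!: arg_cong[where f = card])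
  ultimately show ?thesis by simp
qed

lemma card_colours_le:
  assumes "finite E"
  shows "card (C ` E) \<le> card (C ` delete_vertex E v) + card (private_colours E C v)"
proof -
  have "card (C ` E) \<le> card (C ` delete_vertex E v \<union> private_colours E C v)"
    using assms by (intro card_mono) (auto simp: private_colours_def delete_vertex_def)
  also have "\<dots> \<le> card (C ` delete_vertex E v) + card (private_colours E C v)"
    by (rule card_Un_le)
  finally show ?thesis .
qed

lemma simple_graph_delete_vertex:
  "simple_graph V E \<Longrightarrow> simple_graph (V - {v}) (delete_vertex E v)"
  unfolding simple_graph_def delete_vertex_def by auto

lemma complete_graph_delete_vertex:
  "complete_graph V E \<Longrightarrow> complete_graph (V - {v}) (delete_vertex E v)"
  unfolding complete_graph_def delete_vertex_def by auto

lemma not_complete_graph_delete_vertex: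
  "{u, w} \<in> [V]\<^bsup>2\<^esup> \<Longrightarrow> {u, w} \<notin> E \<Longrightarrow> v \<notin> {u, w}
    \<Longrightarrow> \<not> complete_graph (V - {v}) (delete_vertex E v)"
  unfolding complete_graph_iff delete_vertex_def
  by (metis (no_types, lifting) Diff_iff doubleton_in_nsets_2 insertCI mem_Collect_eq singletonD)

lemma rainbow_triangles_mono: "E' \<subseteq> E \<Longrightarrow> rainbow_triangles E' C \<subseteq> rainbow_triangles E C"
  unfolding rainbow_triangles_def by blast

text \<open>Choosing one edge at \<open>v\<close> of each private colour of \<open>v\<close> yields private neighbours
  that are pairwise non-adjacent: an edge between two of them would carry a colour that is
  not private to \<open>v\<close>, hence distinct from both, and would close a rainbow triangle.\<close>

lemma independent_private_neighbours:
  assumes sg: "simple_graph V E" and rainbow_free: "rainbow_triangles E C = {}"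
  shows "\<exists>X \<subseteq> neighbours E v. card X = card (private_colours E C v) \<and>
    (\<forall>x\<in>X. \<forall>y\<in>X. {x, y} \<notin> E)"
proof -
  have "\<forall>c \<in> private_colours E C v. \<exists>w. {v, w} \<in> E \<and> C {v, w} = c"
  proof
    fix c assume "c \<in> private_colours E C v"
    from \<open>c \<in> private_colours E C v\<close> obtain e where e: "e \<in> E" "C e = c" "v \<in> e"
      by (auto simp: private_colours_def delete_vertex_def)
    then have "e \<in> [V]\<^bsup>2\<^esup>"
      using sg by (auto simp: simple_graph_iff)
    then obtain x y where "e = {x, y}"
      by (rule nsets2_E)
    with e show "\<exists>w. {v, w} \<in> E \<and> C {v, w} = c"
      by (auto simp: insert_commute)
  qed
  from bchoice[OF this] obtain f
    where f: "\<forall>c \<in> private_colours E C v. {v, f c} \<in> E \<and> C {v, f c} = c" ..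
  define X where "X = f ` private_colours E C v"
  have "inj_on f (private_colours E C v)"
    using f by (intro inj_onI) metis
  then have "card X = card (private_colours E C v)"
    by (simp add: X_def card_image)
  moreover have "X \<subseteq> neighbours E v"
    using f by (auto simp: X_def neighbours_def)
  moreover have "{x, y} \<notin> E" if "x \<in> X" "y \<in> X" for x y
  proof
    assume xy: "{x, y} \<in> E"
    obtain a b where ab: "a \<in> private_colours E C v" "b \<in> private_colours E C v" "x = f a" "y = f b"
      using \<open>x \<in> X\<close> \<open>y \<in> X\<close> by (auto simp: X_def)
    have vx: "{v, x} \<in> E" "C {v, x} = a" and vy: "{v, y} \<in> E" "C {v, y} = b"
      using f ab by auto
    have distinct: "v \<noteq> x" "v \<noteq> y" "x \<noteq> y"
      using simple_graph_edge_endpoints[OF sg] vx(1) vy(1) xy by auto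
    then have "a \<noteq> b"
      using ab by auto
    have "{x, y} \<in> delete_vertex E v"
      using xy distinct by (auto simp: delete_vertex_def)
    then have "C {x, y} \<noteq> a" "C {x, y} \<noteq> b"
      using ab(1,2) unfolding private_colours_def by (metis DiffD2 imageI)+
    then have "{v, x, y} \<in> rainbow_triangles E C"
      unfolding rainbow_triangles_def using vx vy xy distinct \<open>a \<noteq> b\<close>
      by (smt (verit) mem_Collect_eq)
    with rainbow_free show False
      by simp
  qed
  ultimately show ?thesis
    by blast
qed

lemma card_neighbours_add_independent_le:
  assumes sg: "simple_graph V E" and "X \<subseteq> V" and independent: "\<forall>x\<in>X. \<forall>y\<in>X. {x, y} \<notin> E"
    and "x \<in> X"
  shows "card (neighbours E x) + card X \<le> card V"
proof -
  have fin: "finite V"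
    using sg by (simp add: simple_graph_iff)
  have "neighbours E x \<subseteq> V - X"
    using neighbours_subset[OF sg, of x] independent \<open>x \<in> X\<close> by (auto simp: neighbours_def)
  then have "card (neighbours E x) \<le> card (V - X)"
    using fin by (intro card_mono) auto
  moreover have "card X \<le> card V"
    using \<open>X \<subseteq> V\<close> fin by (rule card_mono[rotated])
  ultimately show ?thesis
    using \<open>X \<subseteq> V\<close> fin by (simp add: card_Diff_subset finite_subset)
qed

text \<open>For \<open>v\<close> with the most private colours, every private neighbour \<open>x\<close> of \<open>v\<close> satisfies
  \<open>d(x) + s(v) \<le> n \<le> d(x) + s(x) \<le> d(x) + s(v)\<close>: it is tight and again has the most private
  colours. Applied to \<open>x\<close>, this makes \<open>x\<close> and its at least two private neighbours tight.\<close>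

lemma three_tight_vertices:
  fixes C :: "'a set \<Rightarrow> nat"
  assumes sg: "simple_graph V E" and rainbow_free: "rainbow_triangles E C = {}" and "V \<noteq> {}"
    and two_private: "\<And>v. v \<in> V \<Longrightarrow> 2 \<le> card (private_colours E C v)"
    and lower: "\<And>v. v \<in> V \<Longrightarrow> card V \<le> card (neighbours E v) + card (private_colours E C v)"
  shows "3 \<le> card {v \<in> V. card (neighbours E v) + card (private_colours E C v) = card V}"
    (is "3 \<le> card ?tight")
proof -
  define d where "d v = card (neighbours E v)" for v
  define s where "s v = card (private_colours E C v)" for v
  have fin: "finite V"
    using sg by (simp add: simple_graph_iff)
  obtain X where X: "\<And>v. X v \<subseteq> neighbours E v" "\<And>v. card (X v) = s v"
    "\<And>v. \<forall>x\<in>X v. \<forall>y\<in>X v. {x, y} \<notin> E"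
    using independent_private_neighbours[OF sg rainbow_free] unfolding s_def by metis
  have X_sub: "X v \<subseteq> V - {v}" for v
    using X(1) neighbours_subset[OF sg] by blast
  have private_neighbour_bound: "d x + s v \<le> card V" if "x \<in> X v" for v x
    using card_neighbours_add_independent_le[OF sg _ X(3) that] X_sub X(2) unfolding d_def
    by (metis Diff_subset subset_trans)
  define m where "m = Max (s ` V)"
  have s_le_m: "s v \<le> m" if "v \<in> V" for v
    using fin that by (simp add: m_def)
  have "m \<in> s ` V"
    using fin \<open>V \<noteq> {}\<close> unfolding m_def by (intro Max_in) auto
  then obtain v0 where v0: "v0 \<in> V" "s v0 = m"
    by blast
  have propagate: "x \<in> ?tight \<and> s x = m" if "s v = m" "x \<in> X v" for v x
  proof -
    have "x \<in> V"
      using X_sub that(2) by blast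
    with lower[of x] s_le_m[of x] private_neighbour_bound[OF that(2)] that(1) show ?thesis
      unfolding d_def s_def by auto
  qed
  obtain x0 where x0: "x0 \<in> X v0"
    using X(2)[of v0] two_private[OF v0(1)] unfolding s_def by (metis card.empty ex_in_conv not_numeral_le_zero)
  then have x0_tight: "x0 \<in> ?tight" "s x0 = m"
    using propagate v0(2) by blast+
  have "2 \<le> s x0"
    using two_private x0_tight(1) unfolding s_def by blast
  then have "3 \<le> card (insert x0 (X x0))"
    using X(2)[of x0] X_sub[of x0] fin by (simp add: finite_subset[of _ V] subset_Diff_insert)
  also have "\<dots> \<le> card ?tight"
    using propagate[OF x0_tight(2)] x0_tight(1) fin by (intro card_mono) auto
  finally show ?thesis .
qed

text \<open>If no vertex qualifies, then \<open>d(v) + s(v) \<ge> n\<close> everywhere, strictly except at the ends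
  of one non-edge (none if the graph is complete), whose degrees are at most \<open>n - 2\<close>; so every
  \<open>s(v) \<ge> 2\<close> and at most two vertices are tight.\<close>

lemma exists_deletable_vertex:
  fixes C :: "'a set \<Rightarrow> nat"
  assumes sg: "simple_graph V E" and rainbow_free: "rainbow_triangles E C = {}" and "V \<noteq> {}"
  shows "\<exists>v\<in>V. card (neighbours E v) + card (private_colours E C v) + of_bool (\<not> complete_graph V E)
    \<le> card V + of_bool (\<not> complete_graph (V - {v}) (delete_vertex E v))"
proof (rule ccontr)
  define d where "d v = card (neighbours E v)" for v
  define s where "s v = card (private_colours E C v)" for v
  assume "\<not> ?thesis"
  then have excess: "card V + of_bool (\<not> complete_graph (V - {v}) (delete_vertex E v))
      < d v + s v + of_bool (\<not> complete_graph V E)" if "v \<in> V" for v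
    using that unfolding d_def s_def by (meson not_le)
  obtain B where B: "finite B" "card B \<le> 2"
    and outside: "\<And>v. v \<in> V - B \<Longrightarrow> card V < d v + s v"
    and inside: "\<And>v. v \<in> B \<Longrightarrow> d v + 2 \<le> card V"
  proof (cases "complete_graph V E")
    case True
    then show ?thesis
      using that[of "{}"] excess complete_graph_delete_vertex by force
  next
    case False
    then obtain e where "e \<in> [V]\<^bsup>2\<^esup>" "e \<notin> E"
      using sg by (auto simp: complete_graph_iff simple_graph_iff)
    then obtain u w where uw: "{u, w} \<in> [V]\<^bsup>2\<^esup>" "{u, w} \<notin> E"
      by (metis nsets2_E)
    have "card V < d v + s v" if "v \<in> V - {u, w}" for v
      using excess[of v] not_complete_graph_delete_vertex[OF uw, of v] False that by auto
    moreover have "d v + 2 \<le> card V" if "v \<in> {u, w}" for v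
      using card_neighbours_non_edge[OF sg uw] card_neighbours_non_edge[OF sg, of w u] uw that
      unfolding d_def by (auto simp: insert_commute)
    ultimately show ?thesis
      using that[of "{u, w}"] by (simp add: card_insert_if)
  qed
  have lower: "card V \<le> d v + s v" if "v \<in> V" for v
    using excess[OF that] by (cases "complete_graph V E") auto
  have two_private: "2 \<le> s v" if "v \<in> V" for v
  proof (cases "v \<in> B")
    case True
    with inside[of v] lower[OF that] show ?thesis by simp
  next
    case False
    with outside[of v] card_neighbours_less[OF sg that] that show ?thesis
      unfolding d_def by simp
  qed
  have "{v \<in> V. d v + s v = card V} \<subseteq> B"
    using outside by fastforce
  then have "card {v \<in> V. d v + s v = card V} \<le> 2"
    using B by (meson card_mono le_trans)
  moreover have "3 \<le> card {v \<in> V. d v + s v = card V}"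
    using three_tight_vertices[OF sg rainbow_free \<open>V \<noteq> {}\<close>] two_private lower
    unfolding d_def s_def by blast
  ultimately show False
    by simp
qed

theorem rainbow_free_edges_colours_bound:
  fixes C :: "'a set \<Rightarrow> nat"
  assumes "simple_graph V E" and "rainbow_triangles E C = {}" and "V \<noteq> {}"
  shows "card E + card (C ` E) + of_bool (\<not> complete_graph V E) < (card V + 1) choose 2"
  using assms
proof (induction "card V" arbitrary: V E)
  case 0
  then show ?case
    by (simp add: simple_graph_iff)
next
  case (Suc n)
  note sg = Suc.prems(1) and rainbow_free = Suc.prems(2)
  show ?case
  proof (cases "n = 0")
    case True
    then obtain a where "V = {a}"
      using Suc.hyps(2) by (metis One_nat_def card_1_singleton_iff)
    then have "E = {}" "complete_graph V E"
      using sg by (auto simp: simple_graph_iff complete_graph_iff nsets_singleton_iff)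
    with \<open>V = {a}\<close> show ?thesis
      by simp
  next
    case False
    obtain v where v: "v \<in> V" and deletable:
      "card (neighbours E v) + card (private_colours E C v) + of_bool (\<not> complete_graph V E)
        \<le> card V + of_bool (\<not> complete_graph (V - {v}) (delete_vertex E v))"
      using exists_deletable_vertex[OF Suc.prems] by blast
    have "n = card (V - {v})"
      using Suc.hyps(2) v by simp
    moreover have "rainbow_triangles (delete_vertex E v) C = {}"
      using rainbow_triangles_mono[of "delete_vertex E v" E C] rainbow_free
      by (auto simp: delete_vertex_def)
    moreover have "V - {v} \<noteq> {}"
      using Suc.hyps(2) False v by (metis card_Diff_singleton card.empty diff_Suc_1)
    ultimately have "card (delete_vertex E v) + card (C ` delete_vertex E v)
        + of_bool (\<not> complete_graph (V - {v}) (delete_vertex E v)) < (n + 1) choose 2"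
      using Suc.hyps(1) simple_graph_delete_vertex[OF sg] by blast
    moreover have "(card V + 1) choose 2 = card V + ((n + 1) choose 2)"
      using Suc.hyps(2) by (simp add: numeral_2_eq_2)
    ultimately show ?thesis
      using card_edges_delete_vertex[OF sg, of v] deletable
        card_colours_le[OF simple_graph_finite_edges[OF sg], of C v]
      by linarith
  qed
qed

lemma rainbow_triangles_iff:
  "t \<in> rainbow_triangles E C \<longleftrightarrow> card t = 3 \<and> [t]\<^bsup>2\<^esup> \<subseteq> E \<and> inj_on C ([t]\<^bsup>2\<^esup>)"
proof -
  have sides: "[{x, y, z}]\<^bsup>2\<^esup> = {{x, y}, {y, z}, {x, z}}"
    if "x \<noteq> y" "y \<noteq> z" "x \<noteq> z" for x y z :: 'a
    using that by (auto simp: nsets_2_eq doubleton_eq_iff)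
  show ?thesis
    unfolding rainbow_triangles_def card_3_iff
    by (rule iffI; elim CollectE exE conjE) (auto simp: sides doubleton_eq_iff)
qed

lemma rainbow_triangles_delete_edge:
  assumes "card e = 2"
  shows "rainbow_triangles (E - {e}) C = {t \<in> rainbow_triangles E C. \<not> e \<subseteq> t}"
proof -
  have "e \<in> [t]\<^bsup>2\<^esup> \<longleftrightarrow> e \<subseteq> t" for t
    using assms by (simp add: nsets_def card_ge_0_finite)
  then have "[t]\<^bsup>2\<^esup> \<subseteq> E - {e} \<longleftrightarrow> [t]\<^bsup>2\<^esup> \<subseteq> E \<and> \<not> e \<subseteq> t" for t
    by blast
  then show ?thesis
    by (auto simp: rainbow_triangles_iff)
qed

lemma rainbow_triangles_recolour_private_edge:
  assumes unique: "C e \<notin> C ` (E - {e})"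
  shows "rainbow_triangles E (C(e := k)) \<subseteq> rainbow_triangles E C"
proof
  fix t assume "t \<in> rainbow_triangles E (C(e := k))"
  then have t: "card t = 3" "[t]\<^bsup>2\<^esup> \<subseteq> E" "inj_on (C(e := k)) ([t]\<^bsup>2\<^esup>)"
    by (simp_all add: rainbow_triangles_iff)
  have "inj_on C ([t]\<^bsup>2\<^esup>)"
  proof (rule inj_onI)
    fix f g assume fg: "f \<in> [t]\<^bsup>2\<^esup>" "g \<in> [t]\<^bsup>2\<^esup>" "C f = C g"
    show "f = g"
    proof (cases "f = e \<or> g = e")
      case True
      then show ?thesis
        using unique fg t(2) by (metis DiffI imageI singletonD subsetD)
    next
      case False
      then have "(C(e := k)) f = (C(e := k)) g"
        using fg(3) by simp
      then show ?thesis
        using inj_onD[OF t(3)] fg(1,2) by blast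
    qed
  qed
  with t show "t \<in> rainbow_triangles E C"
    by (simp add: rainbow_triangles_iff)
qed

lemma edges_colours_bound_by_deleting_edge:
  fixes C :: "'a set \<Rightarrow> nat"
  assumes sg: "simple_graph V E" and "V \<noteq> {}" and "e \<in> E" and shared: "C e \<in> C ` (E - {e})"
    and rainbow_free: "rainbow_triangles (E - {e}) C = {}"
  shows "card E + card (C ` E) < (card V + 1) choose 2"
proof -
  have "simple_graph V (E - {e})"
    using sg by (auto simp: simple_graph_iff)
  moreover have "\<not> complete_graph V (E - {e})"
    using sg \<open>e \<in> E\<close> by (auto simp: simple_graph_iff complete_graph_iff)
  ultimately have "card (E - {e}) + card (C ` (E - {e})) + 1 < (card V + 1) choose 2"
    using rainbow_free_edges_colours_bound[OF _ rainbow_free \<open>V \<noteq> {}\<close>] by fastforce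
  moreover have "C ` E = C ` (E - {e})"
    using shared by blast
  moreover have "card E = card (E - {e}) + 1"
    using \<open>e \<in> E\<close> simple_graph_finite_edges[OF sg] by (metis Suc_eq_plus1 card_Suc_Diff1)
  ultimately show ?thesis
    by simp
qed

lemma edges_colours_bound_by_recolouring_edge:
  fixes C :: "'a set \<Rightarrow> nat"
  assumes sg: "simple_graph V E" and "V \<noteq> {}" and "e \<in> E"
    and unique: "C e \<notin> C ` (E - {e})" and "k \<in> C ` (E - {e})"
    and rainbow_free: "rainbow_triangles E (C(e := k)) = {}"
  shows "card E + card (C ` E) + of_bool (\<not> complete_graph V E) \<le> (card V + 1) choose 2"
proof -
  have "C(e := k) ` E = C ` (E - {e})"
    using \<open>e \<in> E\<close> \<open>k \<in> C ` (E - {e})\<close> by auto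
  moreover have "C ` E = insert (C e) (C ` (E - {e}))"
    using \<open>e \<in> E\<close> by blast
  then have "card (C ` E) = card (C ` (E - {e})) + 1"
    using unique simple_graph_finite_edges[OF sg] by simp
  ultimately show ?thesis
    using rainbow_free_edges_colours_bound[OF sg rainbow_free \<open>V \<noteq> {}\<close>] by simp
qed

theorem lemma6:
  fixes V :: "'a set" and E :: "'a set set" and C :: "'a set \<Rightarrow> nat"
  assumes "simple_graph V E"
    and "card V \<ge> 3"
    and "card E + num_colors E C \<ge> (card V + 1) choose 2"
    and "card (rainbow_triangles E C) = 1"
  shows "card E + num_colors E C = (card V + 1) choose 2 \<and> complete_graph V E"
proof -
  have "V \<noteq> {}"
    using assms(2) by auto
  obtain T where T: "rainbow_triangles E C = {T}"
    using assms(4) by (auto simp: card_1_singleton_iff)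
  then have "card T = 3" and T_sides: "[T]\<^bsup>2\<^esup> \<subseteq> E" "inj_on C ([T]\<^bsup>2\<^esup>)"
    using rainbow_triangles_iff[of T E C] by auto
  obtain x y z where "T = {x, y, z}" "x \<noteq> y" "y \<noteq> z" "x \<noteq> z"
    using \<open>card T = 3\<close> unfolding card_3_iff by blast
  then obtain e f where sides: "e \<in> [T]\<^bsup>2\<^esup>" "f \<in> [T]\<^bsup>2\<^esup>" "e \<noteq> f"
    by (intro that[of "{x, y}" "{y, z}"]) (auto simp: doubleton_eq_iff)
  then have "e \<in> E" "f \<in> E" "C e \<noteq> C f"
    using T_sides by (auto dest: inj_onD)
  show ?thesis
  proof (cases "C e \<in> C ` (E - {e})")
    case True
    have "e \<subseteq> T" "card e = 2"
      using sides(1) by (simp_all add: nsets_def)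
    then have "rainbow_triangles (E - {e}) C = {}"
      using rainbow_triangles_delete_edge[of e E C] T by simp
    with edges_colours_bound_by_deleting_edge[OF assms(1) \<open>V \<noteq> {}\<close> \<open>e \<in> E\<close> True] assms(3)
    show ?thesis
      by (simp add: num_colors_def)
  next
    case False
    have "\<not> inj_on (C(e := C f)) ([T]\<^bsup>2\<^esup>)"
      using sides by (metis fun_upd_other fun_upd_same inj_onD)
    then have "T \<notin> rainbow_triangles E (C(e := C f))"
      using rainbow_triangles_iff by blast
    moreover have "rainbow_triangles E (C(e := C f)) \<subseteq> {T}"
      using rainbow_triangles_recolour_private_edge[OF False, of "C f"] T by simp
    ultimately have "rainbow_triangles E (C(e := C f)) = {}"
      by (auto simp: subset_singleton_iff)
    moreover have "C f \<in> C ` (E - {e})"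
      using \<open>e \<noteq> f\<close> \<open>f \<in> E\<close> by simp
    ultimately have "card E + num_colors E C + of_bool (\<not> complete_graph V E) \<le> (card V + 1) choose 2"
      using edges_colours_bound_by_recolouring_edge[OF assms(1) \<open>V \<noteq> {}\<close> \<open>e \<in> E\<close> False]
      unfolding num_colors_def by blast
    with assms(3) show ?thesis
      by (cases "complete_graph V E") simp_all
  qed
qed

end
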